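(* Let $X=\mathbb{R}$, let $\beta,K,\nu,\gamma,\eta,\xi,\zeta>0$ with $\gamma>\eta$, and define $$a(x):=\gamma-\eta x^2,\qquad b(x):=\xi+\zeta(1-x)^2 .$$ Assume $\gamma>(\eta\beta)^{1/2}$ and $\mathcal{R}_0>1$, where $$\mathcal{R}_0:=\frac{K}{\nu}\Big(\gamma-(\eta\beta)^{1/2}\Big)\Big(\xi+\zeta+\zeta\Big(\frac{\beta}{\eta}\Big)^{1/2}\Big).$$ Then the unique solution $(\overline{s}_E,\overline{I}_E)$ of the problem $$\beta\,\overline{s}_E''+\Big[a(x)-\Big(b(x)+\frac1K\Big)\overline{I}_E-\frac{\overline{S}_E}{K}\Big]\overline{s}_E=0\ \ (x\in\mathbb{R}),\qquad \Big(\int_{\mathbb{R}} b(x)\overline{s}_E(x)\,dx-\nu\Big)\overline{I}_E=0,$$ $$\overline{S}_E:=\int_{\mathbb{R}}\overline{s}_E\,dx,\qquad \overline{s}_E(\cdot)>0,\quad 0<\overline{S}_E<\infty,\quad 0<\overline{I}_E<\infty,$$ is given by $$\overline{s}_E(x)=\overline{S}_E\Big(\frac{1}{2\pi\overline{\sigma}_E^2}\Big)^{1/2}\exp\Big[-\frac{(x-\overline{\mu}_E)^2}{2\overline{\sigma}_E^2}\Big],\qquad \overline{\sigma}_E^2=\Big(\frac{\beta}{\eta+\zeta\overline{I}_E}\Big)^{1/2},\quad \overline{\mu}_E=\frac{\zeta\overline{I}_E}{\eta+\zeta\overline{I}_E},$$ $$\overline{S}_E=K\Big(\gamma-\Big(\frac1K+\frac{\eta\zeta}{\eta+\zeta\overline{I}_E}+\xi\Big)\overline{I}_E-\beta^{1/2}(\eta+\zeta\overline{I}_E)^{1/2}\Big)>0,$$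 where $\overline{I}_E$ is the unique positive solution of the algebraic equation $$(1+\xi K)\,\overline{I}_E=K\Big(\gamma-\eta\frac{\zeta\overline{I}_E}{\eta+\zeta\overline{I}_E}-\beta^{1/2}(\eta+\zeta\overline{I}_E)^{1/2}\Big)-F(\overline{I}_E),$$ $$F(y):=\nu\Big(\xi+\zeta\Big(\frac{\zeta y}{\eta+\zeta y}-1\Big)^2+\zeta\Big(\frac{\beta}{\eta+\zeta y}\Big)^{1/2}\Big)^{-1}.$$
   Context: This is the steady-state (endemic equilibrium) problem of the SI model $\partial_t s=(a(x)-N/K)s-b(x)Is+\beta\partial_x^2 s$, $I'=(\int b s\,dx-\nu)I$, $N=\int s\,dx+I$. The quantity $\mathcal{R}_0$ defined in the claim is the basic reproduction number for these choices of $a$ and $b$. *)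

theory Defs
  imports "HOL-Analysis.Analysis"
begin

definition a_fun :: "real \<Rightarrow> real \<Rightarrow> real \<Rightarrow> real" where
  "a_fun \<gamma> \<eta> x = \<gamma> - \<eta> * x\<^sup>2"

definition b_fun :: "real \<Rightarrow> real \<Rightarrow> real \<Rightarrow> real" where
  "b_fun \<xi> \<zeta> x = \<xi> + \<zeta> * (1 - x)\<^sup>2"

definition steady_state ::
  "real \<Rightarrow> real \<Rightarrow> real \<Rightarrow> real \<Rightarrow> real \<Rightarrow> real \<Rightarrow> real
   \<Rightarrow> (real \<Rightarrow> real) \<Rightarrow> real \<Rightarrow> bool" where
  "steady_state \<beta> K \<nu> \<gamma> \<eta> \<xi> \<zeta> s I \<longleftrightarrow>
     (\<exists>s' s''. \<forall>x. (s has_real_derivative s' x) (at x) \<and>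
                    (s' has_real_derivative s'' x) (at x) \<and>
        \<beta> * s'' x + (a_fun \<gamma> \<eta> x - (b_fun \<xi> \<zeta> x + 1 / K) * I
                     - integral UNIV s / K) * s x = 0)
     \<and> s integrable_on UNIV
     \<and> (\<lambda>x. b_fun \<xi> \<zeta> x * s x) integrable_on UNIV
     \<and> (integral UNIV (\<lambda>x. b_fun \<xi> \<zeta> x * s x) - \<nu>) * I = 0
     \<and> (\<forall>x. s x > 0)
     \<and> integral UNIV s > 0
     \<and> I > 0"

definition F_fun :: "real \<Rightarrow> real \<Rightarrow> real \<Rightarrow> real \<Rightarrow> real \<Rightarrow> real \<Rightarrow> real" where
  "F_fun \<beta> \<nu> \<eta> \<xi> \<zeta> y =
     \<nu> / (\<xi> + \<zeta> * (\<zeta> * y / (\<eta> + \<zeta> * y) - 1)\<^sup>2 + \<zeta> * sqrt (\<beta> / (\<eta> + \<zeta> * y)))"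

definition R0 :: "real \<Rightarrow> real \<Rightarrow> real \<Rightarrow> real \<Rightarrow> real \<Rightarrow> real \<Rightarrow> real \<Rightarrow> real" where
  "R0 \<beta> K \<nu> \<gamma> \<eta> \<xi> \<zeta> =
     K / \<nu> * (\<gamma> - sqrt (\<eta> * \<beta>)) * (\<xi> + \<zeta> + \<zeta> * sqrt (\<beta> / \<eta>))"

end

(* Completing the square in x turns the steady-state equation for s into the harmonic
   oscillator equation  s'' = ((x - mu)^2 / sigma^4 - kappa) s,  with mu and sigma^2 the
   paper's mean and variance.  A positive integrable solution is convex far out, hence s and s'
   are bounded there, so its Wronskian W with the Gaussian exp (-(x - mu)^2 / (2 sigma^2)) tends
   to 0 at both ends.  Since W' = (1/sigma^2 - kappa) s exp (...) has a fixed sign, W is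
   monotone, hence W = 0 and kappa = 1/sigma^2: s is a multiple of the normal density.
   The eigenvalue condition kappa = 1/sigma^2 expresses the total mass S through I, and the
   infection balance  int b s = nu  gives S = F(I).  Now S(I) strictly decreases, F increases,
   and R0 > 1 says S(0) > F(0), so S(I) = F(I) has exactly one positive root. *)

theory Submission
  imports Defs "HOL-Probability.Distributions" "HOL-Real_Asymp.Real_Asymp"
begin

section \<open>Integrals and derivatives of the normal density\<close>

lemma has_bochner_integral_lborel_imp_has_integral:
  fixes f :: "'a::euclidean_space \<Rightarrow> 'b::euclidean_space"
  assumes "has_bochner_integral lborel f I"
  shows "(f has_integral I) UNIV"
  using has_integral_integral_lborel[OF integrable.intros[OF assms]]
  by (simp add: has_bochner_integral_integral_eq[OF assms])

lemma normal_density_has_integral: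
  assumes "\<sigma> > 0"
  shows "(normal_density m \<sigma> has_integral 1) UNIV"
  using has_integral_integral_lborel[OF integrable_normal_density[OF assms]] assms by simp

lemma normal_density_second_moment_has_integral:
  assumes "\<sigma> > 0"
  shows "((\<lambda>x. (x - p)\<^sup>2 * normal_density m \<sigma> x) has_integral (m - p)\<^sup>2 + \<sigma>\<^sup>2) UNIV"
proof -
  have "has_bochner_integral lborel (\<lambda>x. normal_density m \<sigma> x * (x - m) ^ (2 * 1)) (\<sigma>\<^sup>2)"
    using normal_moment_even[OF assms, of m 1] by (simp add: fact_numeral)
  then have "((\<lambda>x. normal_density m \<sigma> x * (x - m)\<^sup>2) has_integral \<sigma>\<^sup>2) UNIV"
    by (simp add: has_bochner_integral_lborel_imp_has_integral)
  moreover have "((\<lambda>x. normal_density m \<sigma> x * (x - m)) has_integral 0) UNIV"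
    using normal_moment_odd[OF assms, of m 0] by (simp add: has_bochner_integral_lborel_imp_has_integral)
  ultimately have "((\<lambda>x. normal_density m \<sigma> x * (x - m)\<^sup>2 + 2 * (m - p) * (normal_density m \<sigma> x * (x - m))
      + (m - p)\<^sup>2 * normal_density m \<sigma> x) has_integral \<sigma>\<^sup>2 + 2 * (m - p) * 0 + (m - p)\<^sup>2 * 1) UNIV"
    by (intro has_integral_add has_integral_mult_right normal_density_has_integral assms)
  then show ?thesis
    by (simp add: power2_eq_square algebra_simps)
qed

lemma normal_density_has_real_derivative:
  assumes "\<sigma> > 0"
  shows "(normal_density m \<sigma> has_real_derivative - (x - m) / \<sigma>\<^sup>2 * normal_density m \<sigma> x) (at x)"
proof -
  have "((\<lambda>x. exp (- (x - m)\<^sup>2 / (2 * \<sigma>\<^sup>2))) has_real_derivative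
          - (x - m) / \<sigma>\<^sup>2 * exp (- (x - m)\<^sup>2 / (2 * \<sigma>\<^sup>2))) (at x)"
    using assms by (auto intro!: derivative_eq_intros simp: field_simps power2_eq_square)
  from DERIV_cmult[OF this, of "1 / sqrt (2 * pi * \<sigma>\<^sup>2)"] show ?thesis
    unfolding normal_density_def by (simp add: ac_simps)
qed

lemma normal_density_second_derivative:
  assumes "\<sigma> > 0"
  shows "((\<lambda>x. - (x - m) / \<sigma>\<^sup>2 * normal_density m \<sigma> x) has_real_derivative
           ((x - m)\<^sup>2 / \<sigma>^4 - 1 / \<sigma>\<^sup>2) * normal_density m \<sigma> x) (at x)"
proof -
  have "((\<lambda>x. - (x - m) / \<sigma>\<^sup>2) has_real_derivative - 1 / \<sigma>\<^sup>2) (at x)"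
    using assms by (auto intro!: derivative_eq_intros simp: field_simps power2_eq_square)
  from DERIV_mult[OF this normal_density_has_real_derivative[OF assms, where m = m]]
  have "((\<lambda>x. - (x - m) / \<sigma>\<^sup>2 * normal_density m \<sigma> x) has_real_derivative
          - 1 / \<sigma>\<^sup>2 * normal_density m \<sigma> x
          + - (x - m) / \<sigma>\<^sup>2 * normal_density m \<sigma> x * (- (x - m) / \<sigma>\<^sup>2)) (at x)" .
  moreover have "- 1 / \<sigma>\<^sup>2 * normal_density m \<sigma> x
          + - (x - m) / \<sigma>\<^sup>2 * normal_density m \<sigma> x * (- (x - m) / \<sigma>\<^sup>2)
      = ((x - m)\<^sup>2 / \<sigma>^4 - 1 / \<sigma>\<^sup>2) * normal_density m \<sigma> x"
    by (simp add: field_simps power2_eq_square power4_eq_xxxx)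
  ultimately show ?thesis by simp
qed

lemma normal_density_sqrt_variance:
  assumes "v > 0"
  shows "normal_density m (sqrt v) x = sqrt (1 / (2 * pi * v)) * exp (- (x - m)\<^sup>2 / (2 * v))"
  using assms by (simp add: normal_density_def real_sqrt_divide)

lemma b_fun_normal_density_has_integral:
  assumes "\<sigma> > 0"
  shows "((\<lambda>x. b_fun \<xi> \<zeta> x * normal_density m \<sigma> x) has_integral \<xi> + \<zeta> * ((m - 1)\<^sup>2 + \<sigma>\<^sup>2)) UNIV"
proof -
  have "((\<lambda>x. \<xi> * normal_density m \<sigma> x + \<zeta> * ((x - 1)\<^sup>2 * normal_density m \<sigma> x))
          has_integral \<xi> * 1 + \<zeta> * ((m - 1)\<^sup>2 + \<sigma>\<^sup>2)) UNIV"
    by (intro has_integral_add has_integral_mult_right normal_density_has_integral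
          normal_density_second_moment_has_integral assms)
  moreover have "b_fun \<xi> \<zeta> x = \<xi> + \<zeta> * (x - 1)\<^sup>2" for x
    by (simp add: b_fun_def power2_commute)
  ultimately show ?thesis by (simp add: distrib_right mult.assoc)
qed

section \<open>Positive integrable solutions of the harmonic oscillator equation\<close>

lemma mono_tendsto_zero_at_top_at_bot:
  fixes U :: "real \<Rightarrow> real"
  assumes "mono U" and top: "(U \<longlongrightarrow> 0) at_top" and bot: "(U \<longlongrightarrow> 0) at_bot"
  shows "U x = 0"
proof -
  have "\<forall>\<^sub>F z in at_top. U x \<le> U z"
    using eventually_ge_at_top[of x] by eventually_elim (rule monoD[OF \<open>mono U\<close>])
  then have "U x \<le> 0"
    by (rule tendsto_lowerbound[OF top]) simp
  moreover have "\<forall>\<^sub>F z in at_bot. U z \<le> U x"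
    using eventually_le_at_bot[of x] by eventually_elim (rule monoD[OF \<open>mono U\<close>])
  then have "0 \<le> U x"
    by (rule tendsto_upperbound[OF bot]) simp
  ultimately show ?thesis by simp
qed

lemma DERIV_fixed_sign_tendsto_zero_at_top_at_bot:
  fixes V h :: "real \<Rightarrow> real"
  assumes V': "\<And>x. (V has_real_derivative k * h x) (at x)"
    and pos: "\<And>x. h x > 0"
    and top: "(V \<longlongrightarrow> 0) at_top" and bot: "(V \<longlongrightarrow> 0) at_bot"
  shows "V = (\<lambda>_. 0)" and "k = 0"
proof -
  define c :: real where "c = (if 0 \<le> k then 1 else - 1)"
  have "c \<noteq> 0" and "c * k \<ge> 0" unfolding c_def by auto
  have "c * V y \<le> c * V z" if "y \<le> z" for y z
  proof (rule DERIV_nonneg_imp_nondecreasing[of y z "\<lambda>x. c * V x", OF that])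
    fix t
    have "((\<lambda>x. c * V x) has_real_derivative c * k * h t) (at t)"
      using DERIV_cmult[OF V'[of t], of c] by (simp add: mult.assoc)
    moreover have "c * k * h t \<ge> 0"
      using \<open>c * k \<ge> 0\<close> pos[of t] by simp
    ultimately show "\<exists>d. ((\<lambda>x. c * V x) has_real_derivative d) (at t) \<and> d \<ge> 0" by blast
  qed
  then have "mono (\<lambda>x. c * V x)" by (rule monoI)
  then have "c * V x = 0" for x
    by (rule mono_tendsto_zero_at_top_at_bot)
       (use tendsto_mult_left[OF top, of c] tendsto_mult_left[OF bot, of c] in simp_all)
  with \<open>c \<noteq> 0\<close> show V0: "V = (\<lambda>_. 0)" by auto
  have "k * h 0 = 0"
    by (rule DERIV_unique[OF V'[of 0]]) (simp add: V0)
  then show "k = 0" using pos[of 0] by simp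
qed

lemma convex_positive_tail_nonincreasing:
  fixes f f' f'' :: "real \<Rightarrow> real"
  assumes f': "\<And>x. (f has_real_derivative f' x) (at x)"
    and f'': "\<And>x. (f' has_real_derivative f'' x) (at x)"
    and convex: "\<And>x. x \<ge> R \<Longrightarrow> f'' x \<ge> 0"
    and pos: "\<And>x. f x > 0"
    and bounded: "\<And>a b. integral {a..b} f \<le> M"
    and "R \<le> x"
  shows "f x \<le> f R \<and> f' R \<le> f' x \<and> f' x \<le> 0"
proof -
  have f'_mono: "f' y \<le> f' z" if "R \<le> y" "y \<le> z" for y z
    by (rule DERIV_nonneg_imp_nondecreasing[OF \<open>y \<le> z\<close>]) (use f'' convex that in fastforce)
  have f'_nonpos: "f' y \<le> 0" if "R \<le> y" for y
  proof (rule ccontr)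
    \<comment> \<open>otherwise f stays above f y > 0 from y on, and its integrals are unbounded\<close>
    assume "\<not> f' y \<le> 0"
    have f_mono: "f y \<le> f z" if "y \<le> z" for z
      by (rule DERIV_nonneg_imp_nondecreasing[OF that]) (use f' f'_mono[OF \<open>R \<le> y\<close>] \<open>\<not> f' y \<le> 0\<close> in fastforce)
    define n where "n = \<bar>M\<bar> / f y + 1"
    have "n > 0" unfolding n_def using pos[of y] by (simp add: add_nonneg_pos)
    have "continuous_on {y..y + n} f"
      by (meson DERIV_isCont continuous_at_imp_continuous_on f')
    then have "integral {y..y + n} (\<lambda>_. f y) \<le> integral {y..y + n} f"
      by (intro integral_le integrable_continuous_interval) (auto intro: f_mono)
    also have "\<dots> \<le> M" by (rule bounded)
    finally have "n * f y \<le> M" using \<open>n > 0\<close> by simp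
    moreover have "n * f y = \<bar>M\<bar> + f y" unfolding n_def using pos[of y] by (simp add: field_simps)
    ultimately show False using pos[of y] by linarith
  qed
  have "f x \<le> f R"
    by (rule DERIV_nonpos_imp_nonincreasing[OF \<open>R \<le> x\<close>]) (use f' f'_nonpos in fastforce)
  then show ?thesis using f'_mono f'_nonpos \<open>R \<le> x\<close> by auto
qed

lemma convex_outside_interval_bounded:
  fixes f f' f'' :: "real \<Rightarrow> real"
  assumes f': "\<And>x. (f has_real_derivative f' x) (at x)"
    and f'': "\<And>x. (f' has_real_derivative f'' x) (at x)"
    and convex: "\<And>x. R \<le> \<bar>x\<bar> \<Longrightarrow> f'' x \<ge> 0"
    and pos: "\<And>x. f x > 0"
    and integrable: "f integrable_on UNIV"
  shows "\<exists>B. \<forall>x. R \<le> \<bar>x\<bar> \<longrightarrow> \<bar>f x\<bar> \<le> B \<and> \<bar>f' x\<bar> \<le> B"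
proof -
  have "continuous_on {a..b} f" for a b
    by (meson DERIV_isCont continuous_at_imp_continuous_on f')
  then have bounded: "integral {a..b} f \<le> integral UNIV f" for a b
    by (intro integral_subset_le integrable_continuous_interval integrable) (auto intro: less_imp_le pos)
  have right: "f x \<le> f R \<and> f' R \<le> f' x \<and> f' x \<le> 0" if "R \<le> x" for x
    by (rule convex_positive_tail_nonincreasing[OF f' f'' _ pos bounded that]) (auto intro: convex)
  have mirror': "((\<lambda>x. f (- x)) has_real_derivative - f' (- x)) (at x)" for x
    using DERIV_mirror[of f "f' (- x)" x] f' by simp
  have mirror'': "((\<lambda>x. - f' (- x)) has_real_derivative f'' (- x)) (at x)" for x
    using DERIV_minus[OF iffD1[OF DERIV_mirror[of f' "f'' (- x)" x]]] f'' by simp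
  have mirror_bounded: "integral {a..b} (\<lambda>x. f (- x)) \<le> integral UNIV f" for a b
    using Henstock_Kurzweil_Integration.integral_reflect_real[of "- a" "- b" f] bounded[of "- b" "- a"] by simp
  have left: "f (- x) \<le> f (- R) \<and> - f' (- R) \<le> - f' (- x) \<and> - f' (- x) \<le> 0"
    if "R \<le> x" for x
    by (rule convex_positive_tail_nonincreasing[OF mirror' mirror'' _ _ mirror_bounded that])
      (auto intro: convex pos)
  show ?thesis
  proof (intro exI allI impI)
    fix x assume "R \<le> \<bar>x\<bar>"
    then consider "R \<le> x" | "R \<le> - x" by linarith
    then show "\<bar>f x\<bar> \<le> f R + \<bar>f' R\<bar> + f (- R) + \<bar>f' (- R)\<bar> \<and>
               \<bar>f' x\<bar> \<le> f R + \<bar>f' R\<bar> + f (- R) + \<bar>f' (- R)\<bar>"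
      by cases (use right left pos[of x] pos[of R] pos[of "- R"] in fastforce)+
  qed
qed

lemma oscillator_solution_bounded_outside_interval:
  fixes s s' s'' :: "real \<Rightarrow> real"
  assumes "\<sigma> > 0"
    and s': "\<And>x. (s has_real_derivative s' x) (at x)"
    and s'': "\<And>x. (s' has_real_derivative s'' x) (at x)"
    and ode: "\<And>x. s'' x = ((x - m)\<^sup>2 / \<sigma>^4 - \<kappa>) * s x"
    and pos: "\<And>x. s x > 0"
    and integrable: "s integrable_on UNIV"
  obtains R B where "\<And>x. R \<le> \<bar>x\<bar> \<Longrightarrow> \<bar>s x\<bar> \<le> B \<and> \<bar>s' x\<bar> \<le> B"
proof -
  define R where "R = \<bar>m\<bar> + \<bar>\<kappa>\<bar> * \<sigma>^4 + 1"
  have "s'' x \<ge> 0" if "R \<le> \<bar>x\<bar>" for x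
  proof -
    have "\<bar>x\<bar> \<le> \<bar>x - m\<bar> + \<bar>m\<bar>" using abs_triangle_ineq[of "x - m" m] by simp
    then have far: "\<bar>\<kappa>\<bar> * \<sigma>^4 + 1 \<le> \<bar>x - m\<bar>" using that unfolding R_def by linarith
    have "\<kappa> * \<sigma>^4 \<le> \<bar>\<kappa>\<bar> * \<sigma>^4" by (rule mult_right_mono) auto
    also have "\<dots> \<le> \<bar>x - m\<bar> * 1" using far by simp
    also have "\<dots> \<le> \<bar>x - m\<bar> * \<bar>x - m\<bar>"
      using far by (intro mult_left_mono) (auto intro: order_trans[OF _ far])
    also have "\<dots> = (x - m)\<^sup>2" by (simp add: power2_eq_square)
    finally have "\<kappa> \<le> (x - m)\<^sup>2 / \<sigma>^4" using \<open>\<sigma> > 0\<close> by (simp add: pos_le_divide_eq)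
    then show ?thesis unfolding ode using pos[of x] by simp
  qed
  then show thesis
    using convex_outside_interval_bounded[OF s' s'' _ pos integrable] that by metis
qed

lemma bounded_wronskian_normal_density_tendsto_zero:
  fixes s s' :: "real \<Rightarrow> real" and m \<sigma> :: real
  assumes "\<sigma> > 0"
    and bounded: "\<And>x. R \<le> \<bar>x\<bar> \<Longrightarrow> \<bar>s x\<bar> \<le> B \<and> \<bar>s' x\<bar> \<le> B"
  defines "W \<equiv> \<lambda>x. s' x * normal_density m \<sigma> x - s x * (- (x - m) / \<sigma>\<^sup>2 * normal_density m \<sigma> x)"
  shows "(W \<longlongrightarrow> 0) at_top" and "(W \<longlongrightarrow> 0) at_bot"
proof -
  define h where "h x = B * (normal_density m \<sigma> x + \<bar>x - m\<bar> / \<sigma>\<^sup>2 * normal_density m \<sigma> x)" for x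
  have W_le: "\<bar>W x\<bar> \<le> h x" if "R \<le> \<bar>x\<bar>" for x
  proof -
    have "\<bar>W x\<bar> \<le> \<bar>s' x * normal_density m \<sigma> x\<bar> + \<bar>s x * (- (x - m) / \<sigma>\<^sup>2 * normal_density m \<sigma> x)\<bar>"
      unfolding W_def by (rule abs_triangle_ineq4)
    also have "\<dots> = \<bar>s' x\<bar> * normal_density m \<sigma> x + \<bar>s x\<bar> * (\<bar>x - m\<bar> / \<sigma>\<^sup>2 * normal_density m \<sigma> x)"
      by (simp add: abs_mult abs_minus_commute)
    also have "\<dots> \<le> h x"
      unfolding h_def distrib_left using bounded[OF that]
      by (intro add_mono mult_right_mono) (auto intro: mult_nonneg_nonneg)
    finally show ?thesis .
  qed
  have "(h \<longlongrightarrow> 0) at_top"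
    unfolding h_def normal_density_def using \<open>\<sigma> > 0\<close> by real_asymp
  moreover have "\<forall>\<^sub>F x in at_top. R \<le> \<bar>x\<bar>"
    using eventually_ge_at_top[of R] by (rule eventually_mono) simp
  ultimately show "(W \<longlongrightarrow> 0) at_top"
    by (intro Lim_null_comparison[of W]) (auto elim!: eventually_mono intro: W_le)
  have "(h \<longlongrightarrow> 0) at_bot"
    unfolding h_def normal_density_def using \<open>\<sigma> > 0\<close> by real_asymp
  moreover have "\<forall>\<^sub>F x in at_bot. R \<le> \<bar>x\<bar>"
    using eventually_le_at_bot[of "- R"] by (rule eventually_mono) simp
  ultimately show "(W \<longlongrightarrow> 0) at_bot"
    by (intro Lim_null_comparison[of W]) (auto elim!: eventually_mono intro: W_le)
qed

lemma oscillator_positive_integrable_solution: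
  fixes s s' s'' :: "real \<Rightarrow> real"
  assumes \<sigma>: "\<sigma> > 0"
    and s': "\<And>x. (s has_real_derivative s' x) (at x)"
    and s'': "\<And>x. (s' has_real_derivative s'' x) (at x)"
    and ode: "\<And>x. s'' x = ((x - m)\<^sup>2 / \<sigma>^4 - \<kappa>) * s x"
    and pos: "\<And>x. s x > 0"
    and integrable: "s integrable_on UNIV"
  shows "\<kappa> = 1 / \<sigma>\<^sup>2 \<and> (\<exists>C. s = (\<lambda>x. C * normal_density m \<sigma> x))"
proof -
  let ?g = "normal_density m \<sigma>"
  define g' where "g' = (\<lambda>x. - (x - m) / \<sigma>\<^sup>2 * ?g x)"
  define W where "W = (\<lambda>x. s' x * ?g x - s x * g' x)"
  have g': "(?g has_real_derivative g' x) (at x)" for x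
    unfolding g'_def by (rule normal_density_has_real_derivative[OF \<sigma>])
  have W': "(W has_real_derivative (1 / \<sigma>\<^sup>2 - \<kappa>) * (s x * ?g x)) (at x)" for x
  proof -
    have "(W has_real_derivative s'' x * ?g x + g' x * s' x
            - (s' x * g' x + ((x - m)\<^sup>2 / \<sigma>^4 - 1 / \<sigma>\<^sup>2) * ?g x * s x)) (at x)"
      unfolding W_def
      by (intro DERIV_diff DERIV_mult s' s'' g')
         (unfold g'_def, rule normal_density_second_derivative[OF \<sigma>])
    then show ?thesis by (simp add: ode algebra_simps)
  qed
  obtain R B where bounded: "\<And>x. R \<le> \<bar>x\<bar> \<Longrightarrow> \<bar>s x\<bar> \<le> B \<and> \<bar>s' x\<bar> \<le> B"
    using oscillator_solution_bounded_outside_interval[OF \<sigma> s' s'' ode pos integrable] by blast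
  have top: "(W \<longlongrightarrow> 0) at_top"
    unfolding W_def g'_def by (rule bounded_wronskian_normal_density_tendsto_zero(1)[OF \<sigma> bounded])
  have bot: "(W \<longlongrightarrow> 0) at_bot"
    unfolding W_def g'_def by (rule bounded_wronskian_normal_density_tendsto_zero(2)[OF \<sigma> bounded])
  have "s x * ?g x > 0" for x
    using pos[of x] normal_density_pos[OF \<sigma>, of m x] by simp
  from DERIV_fixed_sign_tendsto_zero_at_top_at_bot[OF W' this top bot]
  have W0: "W x = 0" and \<kappa>: "\<kappa> = 1 / \<sigma>\<^sup>2" for x by auto
  have quotient': "((\<lambda>x. s x / ?g x) has_real_derivative (s' x * ?g x - s x * g' x) / (?g x * ?g x)) (at x)" for x
    by (rule DERIV_divide[OF s' g']) (use normal_density_pos[OF \<sigma>, of m x] in simp)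
  have "((\<lambda>x. s x / ?g x) has_real_derivative 0) (at x)" for x
    using quotient'[of x] W0[of x] by (simp add: W_def)
  then have const: "s x / ?g x = s m / ?g m" for x
    using DERIV_isconst_all[of "\<lambda>x. s x / ?g x" x m] by blast
  have "s x = s m / ?g m * ?g x" for x
    using const[of x] normal_density_pos[OF \<sigma>, of m x] by (simp add: divide_eq_eq)
  then have "s = (\<lambda>x. s m / ?g m * ?g x)" by blast
  with \<kappa> show ?thesis by blast
qed

section \<open>The endemic equilibrium of the SI model\<close>

locale si_model =
  fixes \<beta> K \<nu> \<gamma> \<eta> \<xi> \<zeta> :: real
  assumes \<beta>: "\<beta> > 0" and K: "K > 0" and \<nu>: "\<nu> > 0"
    and \<eta>: "\<eta> > 0" and \<xi>: "\<xi> > 0" and \<zeta>: "\<zeta> > 0"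
begin

abbreviation F :: "real \<Rightarrow> real" where
  "F \<equiv> F_fun \<beta> \<nu> \<eta> \<xi> \<zeta>"

definition endemic_mean :: "real \<Rightarrow> real" where
  "endemic_mean I = \<zeta> * I / (\<eta> + \<zeta> * I)"

definition endemic_variance :: "real \<Rightarrow> real" where
  "endemic_variance I = sqrt (\<beta> / (\<eta> + \<zeta> * I))"

definition endemic_mass :: "real \<Rightarrow> real" where
  "endemic_mass I = K * (\<gamma> - (1 / K + \<eta> * \<zeta> / (\<eta> + \<zeta> * I) + \<xi>) * I - sqrt \<beta> * sqrt (\<eta> + \<zeta> * I))"

definition oscillator_eigenvalue :: "real \<Rightarrow> real \<Rightarrow> real" where
  "oscillator_eigenvalue I S = (\<gamma> - \<xi> * I - I / K - S / K - \<eta> * \<zeta> * I / (\<eta> + \<zeta> * I)) / \<beta>"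

lemma curvature_pos: "I \<ge> 0 \<Longrightarrow> \<eta> + \<zeta> * I > 0"
  using \<eta> \<zeta> by (simp add: add_pos_nonneg)

lemma endemic_variance_pos: "I \<ge> 0 \<Longrightarrow> endemic_variance I > 0"
  unfolding endemic_variance_def using \<beta> curvature_pos by simp

lemma endemic_mass_alt:
  "endemic_mass y = K * (\<gamma> - \<eta> * (\<zeta> * y / (\<eta> + \<zeta> * y)) - sqrt \<beta> * sqrt (\<eta> + \<zeta> * y)) - (1 + \<xi> * K) * y"
  unfolding endemic_mass_def using K by (simp add: algebra_simps)

lemma endemic_equation_iff:
  "(1 + \<xi> * K) * y = K * (\<gamma> - \<eta> * (\<zeta> * y / (\<eta> + \<zeta> * y)) - sqrt \<beta> * sqrt (\<eta> + \<zeta> * y)) - F y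
    \<longleftrightarrow> endemic_mass y = F y"
  unfolding endemic_mass_alt by linarith

lemma F_eq_gaussian_moment:
  assumes "y \<ge> 0"
  shows "F y = \<nu> / (\<xi> + \<zeta> * ((endemic_mean y - 1)\<^sup>2 + (sqrt (endemic_variance y))\<^sup>2))"
  unfolding F_fun_def endemic_mean_def endemic_variance_def
  using \<beta> curvature_pos[OF assms] by (simp add: algebra_simps)

lemma F_pos: "y \<ge> 0 \<Longrightarrow> F y > 0"
  unfolding F_eq_gaussian_moment using \<nu> \<xi> \<zeta> by (simp add: add_pos_nonneg)

lemma steady_state_ode_iff:
  assumes "I \<ge> 0"
  shows "\<beta> * s2 + (a_fun \<gamma> \<eta> x - (b_fun \<xi> \<zeta> x + 1 / K) * I - S / K) * s0 = 0 \<longleftrightarrow>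
         s2 = ((x - endemic_mean I)\<^sup>2 / sqrt (endemic_variance I) ^ 4 - oscillator_eigenvalue I S) * s0"
proof -
  define A where "A = \<eta> + \<zeta> * I"
  have A: "A > 0" unfolding A_def by (rule curvature_pos[OF assms])
  have "sqrt (endemic_variance I) ^ 4 = (sqrt (endemic_variance I))\<^sup>2 ^ 2"
    by simp
  also have "\<dots> = \<beta> / A"
    using endemic_variance_pos[OF assms] \<beta> A unfolding endemic_variance_def A_def by simp
  finally have sd4: "sqrt (endemic_variance I) ^ 4 = \<beta> / A" .
  have \<mu>: "endemic_mean I = \<zeta> * I / A" unfolding endemic_mean_def A_def ..
  have "A * (x - \<zeta> * I / A)\<^sup>2 = A * x\<^sup>2 - 2 * \<zeta> * I * x + (\<zeta> * I)\<^sup>2 / A"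
    using A by (simp add: power2_eq_square field_simps)
  moreover have "(\<zeta> * I)\<^sup>2 / A = \<zeta> * I - \<eta> * \<zeta> * I / A"
    using A unfolding A_def by (simp add: power2_eq_square field_simps)
  ultimately have "a_fun \<gamma> \<eta> x - (b_fun \<xi> \<zeta> x + 1 / K) * I - S / K
      = (\<gamma> - \<xi> * I - I / K - S / K - \<eta> * \<zeta> * I / A) - A * (x - \<zeta> * I / A)\<^sup>2"
    unfolding a_fun_def b_fun_def using A_def by (simp add: power2_eq_square algebra_simps)
  also have "\<gamma> - \<xi> * I - I / K - S / K - \<eta> * \<zeta> * I / A = \<beta> * oscillator_eigenvalue I S"
    unfolding oscillator_eigenvalue_def A_def using \<beta> by simp
  finally have square: "a_fun \<gamma> \<eta> x - (b_fun \<xi> \<zeta> x + 1 / K) * I - S / K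
      = \<beta> * oscillator_eigenvalue I S - A * (x - endemic_mean I)\<^sup>2"
    unfolding \<mu> .
  show ?thesis
    unfolding square sd4 using \<beta> A by (auto simp: field_simps)
qed

lemma oscillator_eigenvalue_eq_iff:
  assumes "I \<ge> 0"
  shows "oscillator_eigenvalue I S = 1 / (sqrt (endemic_variance I))\<^sup>2 \<longleftrightarrow> S = endemic_mass I"
proof -
  define A where "A = \<eta> + \<zeta> * I"
  have A: "A > 0" unfolding A_def by (rule curvature_pos[OF assms])
  have v: "endemic_variance I > 0" by (rule endemic_variance_pos[OF assms])
  have "\<beta> / endemic_variance I = sqrt \<beta> * sqrt \<beta> / (sqrt \<beta> / sqrt A)"
    unfolding endemic_variance_def A_def[symmetric] using \<beta> by (simp add: real_sqrt_divide)
  also have "\<dots> = sqrt \<beta> * sqrt A"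
    using \<beta> A by (simp add: field_simps)
  finally have root: "\<beta> / endemic_variance I = sqrt \<beta> * sqrt A" .
  have "oscillator_eigenvalue I S = 1 / (sqrt (endemic_variance I))\<^sup>2 \<longleftrightarrow>
        \<gamma> - \<xi> * I - I / K - S / K - \<eta> * \<zeta> * I / A = \<beta> / endemic_variance I"
    unfolding oscillator_eigenvalue_def A_def using v \<beta> by (auto simp: field_simps)
  also have "\<dots> \<longleftrightarrow> S = endemic_mass I"
    unfolding root endemic_mass_def A_def[symmetric] using K by (auto simp: field_simps)
  finally show ?thesis .
qed

lemma steady_state_imp_endemic:
  assumes "steady_state \<beta> K \<nu> \<gamma> \<eta> \<xi> \<zeta> s I"
  shows "I > 0 \<and> endemic_mass I = F I \<and>
    s = (\<lambda>x. endemic_mass I * normal_density (endemic_mean I) (sqrt (endemic_variance I)) x)"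
proof -
  obtain s' s'' where
      s': "\<And>x. (s has_real_derivative s' x) (at x)"
    and s'': "\<And>x. (s' has_real_derivative s'' x) (at x)"
    and ode: "\<And>x. \<beta> * s'' x + (a_fun \<gamma> \<eta> x - (b_fun \<xi> \<zeta> x + 1 / K) * I - integral UNIV s / K) * s x = 0"
    and integrable: "s integrable_on UNIV"
    and infections: "(integral UNIV (\<lambda>x. b_fun \<xi> \<zeta> x * s x) - \<nu>) * I = 0"
    and pos: "\<And>x. s x > 0" and "I > 0"
    using assms unfolding steady_state_def by blast
  define S where "S = integral UNIV s"
  let ?\<mu> = "endemic_mean I" and ?\<sigma> = "sqrt (endemic_variance I)"
  have \<sigma>: "?\<sigma> > 0" using endemic_variance_pos \<open>I > 0\<close> by simp
  have "s'' x = ((x - ?\<mu>)\<^sup>2 / ?\<sigma> ^ 4 - oscillator_eigenvalue I S) * s x" for x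
    using ode[of x] steady_state_ode_iff \<open>I > 0\<close> unfolding S_def by simp
  from oscillator_positive_integrable_solution[OF \<sigma> s' s'' this pos integrable]
  obtain C where eigenvalue: "oscillator_eigenvalue I S = 1 / ?\<sigma>\<^sup>2"
    and C: "s = (\<lambda>x. C * normal_density ?\<mu> ?\<sigma> x)" by blast
  have "(s has_integral C) UNIV"
    unfolding C using has_integral_mult_right[OF normal_density_has_integral[OF \<sigma>]] by simp
  then have "S = C" unfolding S_def by (rule integral_unique)
  have "S = endemic_mass I"
    using eigenvalue oscillator_eigenvalue_eq_iff \<open>I > 0\<close> by simp
  define D where "D = \<xi> + \<zeta> * ((?\<mu> - 1)\<^sup>2 + ?\<sigma>\<^sup>2)"
  have "((\<lambda>x. b_fun \<xi> \<zeta> x * s x) has_integral S * D) UNIV"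
    unfolding C \<open>S = C\<close> D_def
    using has_integral_mult_right[OF b_fun_normal_density_has_integral[OF \<sigma>], of C]
    by (simp add: ac_simps)
  with infections \<open>I > 0\<close> have "S * D = \<nu>" by (simp add: integral_unique)
  moreover have "D > 0" unfolding D_def using \<xi> \<zeta> by (simp add: add_pos_nonneg)
  ultimately have "S = F I"
    using F_eq_gaussian_moment \<open>I > 0\<close> unfolding D_def by (simp add: field_simps)
  show ?thesis
    using \<open>I > 0\<close> \<open>S = endemic_mass I\<close> \<open>S = F I\<close> C \<open>S = C\<close> by simp
qed

lemma endemic_steady_state:
  assumes "I > 0" and equation: "endemic_mass I = F I"
  shows "steady_state \<beta> K \<nu> \<gamma> \<eta> \<xi> \<zeta>
    (\<lambda>x. endemic_mass I * normal_density (endemic_mean I) (sqrt (endemic_variance I)) x) I"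
proof -
  define S where "S = endemic_mass I"
  let ?\<mu> = "endemic_mean I" and ?\<sigma> = "sqrt (endemic_variance I)"
  let ?g = "normal_density ?\<mu> ?\<sigma>"
  have \<sigma>: "?\<sigma> > 0" using endemic_variance_pos \<open>I > 0\<close> by simp
  have "S > 0" unfolding S_def equation using F_pos \<open>I > 0\<close> by simp
  have mass: "((\<lambda>x. S * ?g x) has_integral S) UNIV"
    using has_integral_mult_right[OF normal_density_has_integral[OF \<sigma>], of S] by simp
  define D where "D = \<xi> + \<zeta> * ((?\<mu> - 1)\<^sup>2 + ?\<sigma>\<^sup>2)"
  have "D > 0" unfolding D_def using \<xi> \<zeta> by (simp add: add_pos_nonneg)
  have "S * D = \<nu>"
    using F_eq_gaussian_moment \<open>I > 0\<close> \<open>D > 0\<close> unfolding S_def equation D_def by simp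
  then have infections: "((\<lambda>x. b_fun \<xi> \<zeta> x * (S * ?g x)) has_integral \<nu>) UNIV"
    using has_integral_mult_right[OF
        b_fun_normal_density_has_integral[OF \<sigma>, where m = ?\<mu> and \<xi> = \<xi> and \<zeta> = \<zeta>], of S]
    unfolding D_def by (simp add: ac_simps)
  have "oscillator_eigenvalue I S = 1 / ?\<sigma>\<^sup>2"
    using oscillator_eigenvalue_eq_iff \<open>I > 0\<close> unfolding S_def by simp
  then have ode: "\<beta> * (S * (((x - ?\<mu>)\<^sup>2 / ?\<sigma> ^ 4 - 1 / ?\<sigma>\<^sup>2) * ?g x))
      + (a_fun \<gamma> \<eta> x - (b_fun \<xi> \<zeta> x + 1 / K) * I - integral UNIV (\<lambda>x. S * ?g x) / K) * (S * ?g x) = 0"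
    for x
    unfolding integral_unique[OF mass] using steady_state_ode_iff \<open>I > 0\<close> by simp
  show ?thesis
    unfolding steady_state_def S_def[symmetric]
  proof (intro conjI exI allI)
    fix x
    show "((\<lambda>x. S * ?g x) has_real_derivative S * (- (x - ?\<mu>) / ?\<sigma>\<^sup>2 * ?g x)) (at x)"
      by (rule DERIV_cmult[OF normal_density_has_real_derivative[OF \<sigma>]])
    show "((\<lambda>x. S * (- (x - ?\<mu>) / ?\<sigma>\<^sup>2 * ?g x)) has_real_derivative
            S * (((x - ?\<mu>)\<^sup>2 / ?\<sigma> ^ 4 - 1 / ?\<sigma>\<^sup>2) * ?g x)) (at x)"
      by (rule DERIV_cmult[OF normal_density_second_derivative[OF \<sigma>]])
    show "S * ?g x > 0" using \<open>S > 0\<close> normal_density_pos[OF \<sigma>] by simp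
  qed (use ode mass infections integral_unique[OF mass] integral_unique[OF infections]
          \<open>S > 0\<close> \<open>I > 0\<close> in auto)
qed

lemma F_mono:
  assumes "0 \<le> y" "y \<le> z"
  shows "F y \<le> F z"
proof -
  have A: "0 < \<eta> + \<zeta> * y" "\<eta> + \<zeta> * y \<le> \<eta> + \<zeta> * z"
    using curvature_pos[OF \<open>0 \<le> y\<close>] \<zeta> assms by simp_all
  have "endemic_mean t - 1 = - (\<eta> / (\<eta> + \<zeta> * t))" if "0 \<le> t" for t
    unfolding endemic_mean_def using curvature_pos[OF that] by (simp add: field_simps)
  moreover have "(\<eta> / (\<eta> + \<zeta> * z))\<^sup>2 \<le> (\<eta> / (\<eta> + \<zeta> * y))\<^sup>2"
    using A \<eta> by (intro power_mono divide_left_mono) auto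
  ultimately have "(endemic_mean z - 1)\<^sup>2 \<le> (endemic_mean y - 1)\<^sup>2"
    using assms by simp
  moreover have "(sqrt (endemic_variance z))\<^sup>2 \<le> (sqrt (endemic_variance y))\<^sup>2"
    using A \<beta> endemic_variance_pos assms unfolding endemic_variance_def
    by (simp add: divide_left_mono)
  ultimately have "\<xi> + \<zeta> * ((endemic_mean z - 1)\<^sup>2 + (sqrt (endemic_variance z))\<^sup>2)
      \<le> \<xi> + \<zeta> * ((endemic_mean y - 1)\<^sup>2 + (sqrt (endemic_variance y))\<^sup>2)"
    using \<zeta> by simp
  then show ?thesis
    unfolding F_eq_gaussian_moment[OF \<open>0 \<le> y\<close>] F_eq_gaussian_moment[OF order_trans[OF assms]]
    using \<nu> \<xi> \<zeta> by (intro divide_left_mono) (auto intro!: add_pos_nonneg mult_pos_pos)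
qed

lemma endemic_mass_strict_antimono:
  assumes "0 \<le> y" "y < z"
  shows "endemic_mass z < endemic_mass y"
proof -
  have A: "0 < \<eta> + \<zeta> * y" "\<eta> + \<zeta> * y \<le> \<eta> + \<zeta> * z" "0 < \<eta> + \<zeta> * z"
    using curvature_pos[of y] curvature_pos[of z] \<zeta> assms by simp_all
  have "\<zeta> * y / (\<eta> + \<zeta> * y) \<le> \<zeta> * z / (\<eta> + \<zeta> * z)"
    using A \<eta> \<zeta> assms by (simp add: divide_simps algebra_simps)
  then have "K * (\<eta> * (\<zeta> * y / (\<eta> + \<zeta> * y))) + K * (sqrt \<beta> * sqrt (\<eta> + \<zeta> * y))
      \<le> K * (\<eta> * (\<zeta> * z / (\<eta> + \<zeta> * z))) + K * (sqrt \<beta> * sqrt (\<eta> + \<zeta> * z))"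
    using A \<eta> \<beta> K by (intro add_mono mult_left_mono) auto
  moreover have "(1 + \<xi> * K) * y < (1 + \<xi> * K) * z"
    using assms \<xi> K by (simp add: add_pos_nonneg)
  ultimately show ?thesis
    unfolding endemic_mass_alt right_diff_distrib by linarith
qed

lemma endemic_mass_le: "0 \<le> y \<Longrightarrow> endemic_mass y \<le> K * \<gamma> - y"
  unfolding endemic_mass_alt using K \<xi> \<eta> \<zeta> \<beta> curvature_pos[of y]
  by (simp add: algebra_simps add_nonneg_nonneg mult_nonneg_nonneg)

lemma continuous_on_endemic_mass_minus_F: "continuous_on {0..} (\<lambda>y. endemic_mass y - F y)"
proof -
  have "\<eta> + \<zeta> * y \<noteq> 0" if "y \<in> {0..}" for y
    using curvature_pos that by fastforce
  moreover have "\<xi> + \<zeta> * (\<zeta> * y / (\<eta> + \<zeta> * y) - 1)\<^sup>2 + \<zeta> * sqrt (\<beta> / (\<eta> + \<zeta> * y)) \<noteq> 0"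
    if "y \<in> {0..}" for y
    using F_pos[of y] that unfolding F_fun_def by auto
  ultimately show ?thesis
    unfolding endemic_mass_alt F_fun_def by (intro continuous_intros) auto
qed

lemma R0_gt_1_iff: "R0 \<beta> K \<nu> \<gamma> \<eta> \<xi> \<zeta> > 1 \<longleftrightarrow> F 0 < endemic_mass 0"
proof -
  define D where "D = \<xi> + \<zeta> + \<zeta> * sqrt (\<beta> / \<eta>)"
  have "D > 0" unfolding D_def using \<xi> \<zeta> \<beta> \<eta> by (simp add: add_pos_nonneg)
  have "R0 \<beta> K \<nu> \<gamma> \<eta> \<xi> \<zeta> > 1 \<longleftrightarrow> \<nu> < K * (\<gamma> - sqrt (\<eta> * \<beta>)) * D"
    unfolding R0_def D_def using \<nu> by (simp add: less_divide_eq)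
  also have "\<dots> \<longleftrightarrow> \<nu> / D < K * (\<gamma> - sqrt (\<eta> * \<beta>))"
    using \<open>D > 0\<close> by (simp add: divide_less_eq)
  also have "\<nu> / D = F 0" unfolding F_fun_def D_def by simp
  also have "K * (\<gamma> - sqrt (\<eta> * \<beta>)) = endemic_mass 0"
    unfolding endemic_mass_def by (simp add: real_sqrt_mult)
  finally show ?thesis .
qed

lemma endemic_equation_unique_root:
  assumes "F 0 < endemic_mass 0"
  shows "\<exists>!I. I > 0 \<and> endemic_mass I = F I"
proof -
  let ?G = "\<lambda>y. endemic_mass y - F y"
  have G_strict: "?G z < ?G y" if "0 \<le> y" "y < z" for y z
    using endemic_mass_strict_antimono[OF that] F_mono[OF that(1) less_imp_le[OF that(2)]] by simp
  have "0 < K * \<gamma>"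
    using assms F_pos[of 0] endemic_mass_le[of 0] by simp
  moreover have "?G (K * \<gamma>) \<le> 0"
    using endemic_mass_le[of "K * \<gamma>"] F_pos[of "K * \<gamma>"] calculation by simp
  ultimately obtain I where "0 \<le> I" "I \<le> K * \<gamma>" "?G I = 0"
    using IVT2'[of ?G "K * \<gamma>" 0 0] assms
      continuous_on_subset[OF continuous_on_endemic_mass_minus_F, of "{0 .. K * \<gamma>}"]
    by auto
  moreover have "I \<noteq> 0" using \<open>?G I = 0\<close> assms by auto
  ultimately have "I > 0 \<and> endemic_mass I = F I" by simp
  moreover have "J = I" if "J > 0" "endemic_mass J = F J" for J
    using G_strict[of I J] G_strict[of J I] that \<open>?G I = 0\<close> \<open>0 \<le> I\<close>
    by (cases J I rule: linorder_cases) auto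
  ultimately show ?thesis by blast
qed

end

theorem proposition2:
  fixes \<beta> K \<nu> \<gamma> \<eta> \<xi> \<zeta> :: real
  assumes "\<beta> > 0" "K > 0" "\<nu> > 0" "\<gamma> > 0" "\<eta> > 0" "\<xi> > 0" "\<zeta> > 0"
    and "\<gamma> > \<eta>"
    and "\<gamma> > sqrt (\<eta> * \<beta>)"
    and "R0 \<beta> K \<nu> \<gamma> \<eta> \<xi> \<zeta> > 1"
  shows "\<exists>IE::real. IE > 0
    \<and> (1 + \<xi> * K) * IE = K * (\<gamma> - \<eta> * (\<zeta> * IE / (\<eta> + \<zeta> * IE))
                                - sqrt \<beta> * sqrt (\<eta> + \<zeta> * IE)) - F_fun \<beta> \<nu> \<eta> \<xi> \<zeta> IE
    \<and> (\<forall>y::real. y > 0 \<and>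
         (1 + \<xi> * K) * y = K * (\<gamma> - \<eta> * (\<zeta> * y / (\<eta> + \<zeta> * y))
                                - sqrt \<beta> * sqrt (\<eta> + \<zeta> * y)) - F_fun \<beta> \<nu> \<eta> \<xi> \<zeta> y
         \<longrightarrow> y = IE)
    \<and> (let \<sigma>2 = sqrt (\<beta> / (\<eta> + \<zeta> * IE));
           \<mu> = \<zeta> * IE / (\<eta> + \<zeta> * IE);
           SE = K * (\<gamma> - (1 / K + \<eta> * \<zeta> / (\<eta> + \<zeta> * IE) + \<xi>) * IE
                     - sqrt \<beta> * sqrt (\<eta> + \<zeta> * IE));
           sE = (\<lambda>x. SE * sqrt (1 / (2 * pi * \<sigma>2)) * exp (- (x - \<mu>)\<^sup>2 / (2 * \<sigma>2)))
       in SE > 0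
          \<and> (\<forall>s I. steady_state \<beta> K \<nu> \<gamma> \<eta> \<xi> \<zeta> s I \<longleftrightarrow> (s = sE \<and> I = IE)))"
proof -
  interpret si_model \<beta> K \<nu> \<gamma> \<eta> \<xi> \<zeta>
    by unfold_locales (use assms in auto)
  obtain IE where IE: "IE > 0" "endemic_mass IE = F IE"
    and unique: "\<And>I. I > 0 \<Longrightarrow> endemic_mass I = F I \<Longrightarrow> I = IE"
    using endemic_equation_unique_root[OF R0_gt_1_iff[THEN iffD1, OF assms(10)]] by blast
  let ?sE = "\<lambda>x. endemic_mass IE * normal_density (endemic_mean IE) (sqrt (endemic_variance IE)) x"
  have steady: "steady_state \<beta> K \<nu> \<gamma> \<eta> \<xi> \<zeta> s I \<longleftrightarrow> s = ?sE \<and> I = IE" for s I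
    using steady_state_imp_endemic[of s I] endemic_steady_state[OF IE] unique by blast
  have profile: "(\<lambda>x. endemic_mass IE * sqrt (1 / (2 * pi * endemic_variance IE))
      * exp (- (x - endemic_mean IE)\<^sup>2 / (2 * endemic_variance IE))) = ?sE"
    using normal_density_sqrt_variance[OF endemic_variance_pos] IE by (simp add: mult.assoc)
  have "endemic_mass IE > 0" using IE F_pos by simp
  show ?thesis
    unfolding Let_def endemic_equation_iff
    unfolding endemic_mass_def[symmetric] endemic_mean_def[symmetric] endemic_variance_def[symmetric]
  proof (intro exI[of _ IE] conjI allI impI)
    fix y assume "y > 0 \<and> endemic_mass y = F y"
    then show "y = IE" using unique by blast
  qed (use IE steady profile \<open>endemic_mass IE > 0\<close> in simp_all)
qed

end
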